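(* Let $Q=\mathrm{diag}(q_1,\dots,q_n)$ with $q_i>0$, $C(u)=\frac12u^TQu$, $P^l\in\mathbb{R}^n$, and suppose there exist $\overline\eta\in\mathcal{R}(D^T)$, $\overline V\in\mathbb{R}^n_{>0}$ and $\overline E_{fd}\in\mathbb{R}^n$ with \[ \Big(Q^{-1}\frac{\mathbf{1}_n\mathbf{1}_n^T}{\mathbf{1}_n^TQ^{-1}\mathbf{1}_n}-I_n\Big)P^l=D\Gamma(\overline V)\boldsymbol{\sin}(\overline\eta),\qquad \mathbf{0}=-E(\overline\eta)\overline V+\overline E_{fd}. \] Then the (unique) minimizer $\overline u$ of $\min_u C(u)$ subject to $\mathbf{1}_n^T(u-P^l)=0$ coincides with the $u$-component $\overline u'$ of a minimizer of \[ \min_{u,\eta}C(u)\quad\text{subject to}\quad \mathbf{0}=u-D\Gamma(\overline V)\boldsymbol{\sin}(\eta)-P^l,\ \ \eta\in\mathcal{R}(D^T). \]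
   Context: Standing setup (power network model). $\mathcal{G}=(\mathcal{V},\mathcal{E})$ is a connected undirected graph with node set $\{1,\dots,n\}$ and $m$ edges; each edge $k=\{i,j\}$ is given an arbitrary orientation, and $D\in\mathbb{R}^{n\times m}$ is the incidence matrix: $d_{ik}=+1$ if $i$ is the positive end of edge $k$, $-1$ if $i$ is the negative end, $0$ otherwise. $\mathbf{1}_n$ is the all-ones vector. For each edge $k=\{i,j\}$ there is a susceptance $B_{ij}=B_{ji}>0$; each node has a self-susceptance $B_{ii}<0$ with $|B_{ii}|>\sum_{j\in\mathcal{N}_i}|B_{ij}|$, and reactances $X_{di}>X'_{di}>0$. For $V\in\mathbb{R}^n$, $\Gamma(V)=\mathrm{diag}(\gamma_1,\dots,\gamma_m)$ with $\gamma_k=V_iV_jB_{ij}$ for edge $k=\{i,j\}$. For $\eta\in\mathbb{R}^m$, $E(\eta)\in\mathbb{R}^{n\times n}$ is the symmetric matrix with $E_{ii}=\frac{1-B_{ii}(X_{di}-X'_{di})}{X_{di}-X'_{di}}$, $E_{ij}=-B_{ij}\cos(\eta_k)$ if $k=\{i,j\}$ is an edge, and $E_{ij}=0$ otherwise. $\boldsymbol{\sin}$ acts componentwise. *)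

theory Defs
  imports "HOL-Analysis.Analysis"
begin

text \<open>Graph: nodes are the elements of a finite type 'n, edges the elements of a finite
  type 'm. Edge k is oriented from its positive end fst (ends k) to its negative end
  snd (ends k).\<close>

definition adjacent :: "('m \<Rightarrow> 'n \<times> 'n) \<Rightarrow> 'n \<Rightarrow> 'n \<Rightarrow> bool" where
  "adjacent ends i j \<longleftrightarrow> (\<exists>k. ends k = (i, j) \<or> ends k = (j, i))"

definition simple_graph :: "('m \<Rightarrow> 'n \<times> 'n) \<Rightarrow> bool" where
  "simple_graph ends \<longleftrightarrow>
     (\<forall>k. fst (ends k) \<noteq> snd (ends k)) \<and>
     (\<forall>k l. {fst (ends k), snd (ends k)} = {fst (ends l), snd (ends l)} \<longrightarrow> k = l)"

definition connected_graph :: "('m \<Rightarrow> 'n \<times> 'n) \<Rightarrow> bool" where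
  "connected_graph ends \<longleftrightarrow> (\<forall>i j. (adjacent ends)\<^sup>*\<^sup>* i j)"

definition neighbours :: "('m \<Rightarrow> 'n \<times> 'n) \<Rightarrow> 'n \<Rightarrow> 'n set" where
  "neighbours ends i = {j. adjacent ends i j}"

definition incidence :: "('m::finite \<Rightarrow> 'n::finite \<times> 'n) \<Rightarrow> real^'m^'n" where
  "incidence ends = (\<chi> i k. if i = fst (ends k) then 1 else if i = snd (ends k) then -1 else 0)"

definition Gam :: "('m::finite \<Rightarrow> 'n::finite \<times> 'n) \<Rightarrow> ('n \<Rightarrow> 'n \<Rightarrow> real) \<Rightarrow> real^'n \<Rightarrow> real^'m^'m" where
  "Gam ends B V = (\<chi> k l. if k = l then V $ fst (ends k) * V $ snd (ends k) * B (fst (ends k)) (snd (ends k)) else 0)"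

definition Emat :: "('m::finite \<Rightarrow> 'n::finite \<times> 'n) \<Rightarrow> ('n \<Rightarrow> 'n \<Rightarrow> real) \<Rightarrow> ('n \<Rightarrow> real) \<Rightarrow> ('n \<Rightarrow> real)
     \<Rightarrow> real^'m \<Rightarrow> real^'n^'n" where
  "Emat ends B Xd Xdp eta = (\<chi> i j.
     if i = j then (1 - B i i * (Xd i - Xdp i)) / (Xd i - Xdp i)
     else if adjacent ends i j
       then - B i j * cos (eta $ (THE k. ends k = (i, j) \<or> ends k = (j, i)))
       else 0)"

definition sinv :: "real^'m \<Rightarrow> real^'m" where
  "sinv eta = (\<chi> k. sin (eta $ k))"

definition diagm :: "real^'n \<Rightarrow> real^'n^'n" where
  "diagm q = (\<chi> i j. if i = j then q $ i else 0)"

definition cost :: "real^'n^'n \<Rightarrow> real^'n \<Rightarrow> real" where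
  "cost Q u = (1/2) * (u \<bullet> (Q *v u))"

end

theory Submission
  imports Defs
begin

text \<open>
  With Q = diag(q), q > 0, the cost C(u) = 1/2 \<Sum> q_i u_i^2 is a strictly convex
  quadratic, and on the hyperplane H = {u. \<Sum> u_i = \<Sum> Pl_i} its unique minimiser is the
  "equal marginal cost" point w with q_i w_i = c for all i (Lagrange condition): for every u in
  H we have C(u) = C(w) + 1/2 \<Sum> q_i (u_i - w_i)^2.  Hence ubar = w.

  The first hypothesis on etabar says exactly that D \<Gamma>(Vbar) sin(etabar) + Pl is this point w,
  because the matrix Q^(-1) 1 1^T / (1^T Q^(-1) 1) applied to Pl is the vector with entries
  c / q_i, c = \<Sum> Pl_i / \<Sum> (1/q_i).  So w is feasible for the second problem (with eta = etabar).
  Conversely every feasible point of the second problem lies in H, since the columns of an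
  incidence matrix sum to zero.  A minimiser over H that is feasible for the smaller problem is
  its unique minimiser, which is the claim.
\<close>

lemma diagm_mult_vec: "(diagm q *v u) $ i = q $ i * u $ i"
proof -
  have "(\<Sum>j\<in>UNIV. (if i = j then q $ i else 0) * u $ j) = (\<Sum>j\<in>UNIV. if j = i then q $ i * u $ i else 0)"
    by (intro sum.cong) auto
  then show ?thesis by (simp add: matrix_vector_mult_def diagm_def)
qed

lemma diagm_mult: "diagm (a::real^'n) ** diagm b = diagm (\<chi> i. a $ i * b $ i)"
proof -
  have "(\<Sum>k\<in>UNIV. (if i = k then a $ i else 0) * (if k = j then b $ k else 0))
      = (if i = j then a $ i * b $ i else 0)" for i j :: 'n
  proof -
    have "(\<Sum>k\<in>UNIV. (if i = k then a $ i else 0) * (if k = j then b $ k else 0))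
        = (\<Sum>k\<in>UNIV. if k = i then (if i = j then a $ i * b $ i else 0) else 0)"
      by (intro sum.cong) auto
    then show ?thesis by simp
  qed
  then show ?thesis by (simp add: diagm_def matrix_matrix_mult_def vec_eq_iff)
qed

text \<open>A two-sided inverse is the value of \<open>matrix_inv\<close> (which is defined by choice).\<close>

lemma matrix_inv_eqI:
  fixes A R :: "'a::semiring_1^'n^'n"
  assumes AR: "A ** R = mat 1" and RA: "R ** A = mat 1"
  shows "matrix_inv A = R"
proof -
  have "\<exists>A'. A ** A' = mat 1 \<and> A' ** A = mat 1" using AR RA by blast
  then have inv: "A ** matrix_inv A = mat 1 \<and> matrix_inv A ** A = mat 1"
    unfolding matrix_inv_def by (rule someI_ex)
  have "matrix_inv A = matrix_inv A ** (A ** R)" using AR by simp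
  also have "\<dots> = R" using inv by (simp add: matrix_mul_assoc)
  finally show ?thesis .
qed

lemma matrix_inv_diagm:
  fixes q :: "real^'n"
  assumes "\<And>i. q $ i \<noteq> 0"
  shows "matrix_inv (diagm q) = diagm (\<chi> i. 1 / q $ i)"
  using assms by (intro matrix_inv_eqI) (simp_all add: diagm_mult, simp_all add: diagm_def mat_def vec_eq_iff)

lemma inner_one: "vec 1 \<bullet> (x::real^'n) = (\<Sum>i\<in>UNIV. x $ i)"
  by (simp add: inner_vec_def)

lemma cost_diagm: "cost (diagm q) (u::real^'n) = 1/2 * (\<Sum>i\<in>UNIV. q $ i * (u $ i)^2)"
  unfolding cost_def inner_vec_def by (simp add: diagm_mult_vec power2_eq_square mult_ac)

lemma incidence_column_sum:
  assumes "fst (ends k) \<noteq> snd (ends k)"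
  shows "(\<Sum>i\<in>UNIV. incidence ends $ i $ k) = 0"
proof -
  have "(\<Sum>i\<in>UNIV. incidence ends $ i $ k)
      = (\<Sum>i\<in>UNIV. (if i = fst (ends k) then 1 else 0) + (if i = snd (ends k) then -1 else 0))"
    using assms by (intro sum.cong) (auto simp: incidence_def)
  also have "\<dots> = 0" by (simp add: sum.distrib)
  finally show ?thesis .
qed

lemma incidence_balanced:
  fixes ends :: "'m::finite \<Rightarrow> 'n::finite \<times> 'n"
  assumes no_loops: "\<And>k. fst (ends k) \<noteq> snd (ends k)"
  shows "vec 1 \<bullet> (incidence ends *v y) = 0"
proof -
  have "vec 1 \<bullet> (incidence ends *v y) = (\<Sum>i\<in>UNIV. \<Sum>k\<in>UNIV. incidence ends $ i $ k * y $ k)"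
    unfolding inner_one by (simp add: matrix_vector_mult_def)
  also have "\<dots> = (\<Sum>k\<in>UNIV. (\<Sum>i\<in>UNIV. incidence ends $ i $ k) * y $ k)"
    by (subst sum.swap) (simp add: sum_distrib_right)
  also have "\<dots> = 0" by (simp add: incidence_column_sum no_loops)
  finally show ?thesis .
qed

text \<open>The projection appearing in the hypothesis on etabar maps Pl to the vector of entries
  c / q_i, with c the total load divided by \<Sum> 1/q_i.  (No case split on that sum is
  needed: both sides vanish when it is zero, as division by zero yields zero.)\<close>

lemma equal_marginal_projection:
  fixes q P :: "real^'n"
  assumes "\<And>i. q $ i \<noteq> 0"
  defines "s \<equiv> \<Sum>i\<in>UNIV. 1 / q $ i"
  shows "((inverse (vec 1 \<bullet> (matrix_inv (diagm q) *v vec 1))) *\<^sub>R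
            (matrix_inv (diagm q) ** (\<chi> i j. 1)) - mat 1) *v P
         = (\<chi> i. (\<Sum>j\<in>UNIV. P $ j) / (s * q $ i)) - P"
proof -
  have ones: "(\<chi> i j. 1) *v P = vec (\<Sum>j\<in>UNIV. P $ j)"
    by (simp add: matrix_vector_mult_def vec_eq_iff)
  have "vec 1 \<bullet> (matrix_inv (diagm q) *v vec 1) = s"
    unfolding inner_one matrix_inv_diagm[OF assms(1)] by (simp add: diagm_mult_vec s_def)
  then show ?thesis
    by (simp add: algebra_simps matrix_vector_mul_assoc[symmetric] scaleR_matrix_vector_assoc[symmetric]
        ones matrix_inv_diagm[OF assms(1)] diagm_mult_vec vec_eq_iff inverse_eq_divide)
qed

lemma cost_equal_marginal_expansion:
  fixes q u w :: "real^'n"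
  assumes marginal: "\<And>i. q $ i * w $ i = c"
    and same_total: "(\<Sum>i\<in>UNIV. u $ i) = (\<Sum>i\<in>UNIV. w $ i)"
  shows "cost (diagm q) u = cost (diagm q) w + 1/2 * (\<Sum>i\<in>UNIV. q $ i * (u $ i - w $ i)^2)"
proof -
  have "(\<Sum>i\<in>UNIV. q $ i * (u $ i)^2)
      = (\<Sum>i\<in>UNIV. q $ i * (u $ i - w $ i)^2 + 2 * (q $ i * w $ i) * u $ i - (q $ i * w $ i) * w $ i)"
    by (intro sum.cong) (auto simp: power2_eq_square algebra_simps)
  also have "\<dots> = (\<Sum>i\<in>UNIV. q $ i * (u $ i - w $ i)^2) + 2 * c * (\<Sum>i\<in>UNIV. u $ i) - c * (\<Sum>i\<in>UNIV. w $ i)"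
    by (simp add: marginal sum.distrib sum_subtractf sum_distrib_left)
  moreover have "(\<Sum>i\<in>UNIV. q $ i * (w $ i)^2) = c * (\<Sum>i\<in>UNIV. w $ i)"
    by (simp add: power2_eq_square sum_distrib_left mult.assoc[symmetric] marginal)
  ultimately show ?thesis using same_total by (simp add: cost_diagm algebra_simps)
qed

lemma equal_marginal_unique_min:
  fixes q u w :: "real^'n"
  assumes q_pos: "\<And>i. q $ i > 0"
    and marginal: "\<And>i. q $ i * w $ i = c"
    and same_total: "(\<Sum>i\<in>UNIV. u $ i) = (\<Sum>i\<in>UNIV. w $ i)"
    and le: "cost (diagm q) u \<le> cost (diagm q) w"
  shows "u = w"
proof -
  have nonneg: "\<And>i. 0 \<le> q $ i * (u $ i - w $ i)^2" using q_pos by (simp add: less_imp_le)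
  have "(\<Sum>i\<in>UNIV. q $ i * (u $ i - w $ i)^2) \<le> 0"
    using le cost_equal_marginal_expansion[OF marginal same_total] by simp
  moreover have "0 \<le> (\<Sum>i\<in>UNIV. q $ i * (u $ i - w $ i)^2)" by (intro sum_nonneg nonneg)
  ultimately have "(\<Sum>i\<in>UNIV. q $ i * (u $ i - w $ i)^2) = 0" by linarith
  then have "\<forall>i. q $ i * (u $ i - w $ i)^2 = 0" using nonneg by (simp add: sum_nonneg_eq_0_iff)
  then show "u = w" using q_pos by (simp add: vec_eq_iff) (metis less_irrefl)
qed

theorem lemma4:
  fixes ends :: "'m::finite \<Rightarrow> 'n::finite \<times> 'n"
    and B :: "'n \<Rightarrow> 'n \<Rightarrow> real"
    and Xd Xdp :: "'n \<Rightarrow> real"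
    and q Pl Vbar Efd ubar :: "real^'n"
    and etabar :: "real^'m"
  assumes simple: "simple_graph ends"
    and conn: "connected_graph ends"
    and B_sym: "\<And>i j. B i j = B j i"
    and B_pos: "\<And>i j. adjacent ends i j \<Longrightarrow> B i j > 0"
    and B_self: "\<And>i. B i i < 0"
    and B_dom: "\<And>i. \<bar>B i i\<bar> > (\<Sum>j\<in>neighbours ends i. \<bar>B i j\<bar>)"
    and X_pos: "\<And>i. 0 < Xdp i" "\<And>i. Xdp i < Xd i"
    and q_pos: "\<And>i. q $ i > 0"
    and eta_range: "etabar \<in> range (\<lambda>x. transpose (incidence ends) *v x)"
    and V_pos: "\<And>i. Vbar $ i > 0"
    and eq1: "((inverse (vec 1 \<bullet> (matrix_inv (diagm q) *v vec 1))) *\<^sub>R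
                 (matrix_inv (diagm q) ** (\<chi> i j. 1)) - mat 1) *v Pl
              = incidence ends *v (Gam ends B Vbar *v sinv etabar)"
    and eq2: "0 = - (Emat ends B Xd Xdp etabar *v Vbar) + Efd"
    and ubar_min: "vec 1 \<bullet> (ubar - Pl) = 0"
                  "\<And>u. vec 1 \<bullet> (u - Pl) = 0 \<Longrightarrow> cost (diagm q) ubar \<le> cost (diagm q) u"
  shows "(\<exists>eta. ubar - incidence ends *v (Gam ends B Vbar *v sinv eta) - Pl = 0
              \<and> eta \<in> range (\<lambda>x. transpose (incidence ends) *v x)
              \<and> (\<forall>u' eta'. u' - incidence ends *v (Gam ends B Vbar *v sinv eta') - Pl = 0
                    \<and> eta' \<in> range (\<lambda>x. transpose (incidence ends) *v x)
                    \<longrightarrow> cost (diagm q) ubar \<le> cost (diagm q) u'))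
       \<and> (\<forall>u eta. (u - incidence ends *v (Gam ends B Vbar *v sinv eta) - Pl = 0
                    \<and> eta \<in> range (\<lambda>x. transpose (incidence ends) *v x)
                    \<and> (\<forall>u' eta'. u' - incidence ends *v (Gam ends B Vbar *v sinv eta') - Pl = 0
                          \<and> eta' \<in> range (\<lambda>x. transpose (incidence ends) *v x)
                          \<longrightarrow> cost (diagm q) u \<le> cost (diagm q) u'))
                  \<longrightarrow> u = ubar)"
proof -
  define flow where "flow eta = incidence ends *v (Gam ends B Vbar *v sinv eta)" for eta
  define w where "w = flow etabar + Pl"
  define c where "c = (\<Sum>j\<in>UNIV. Pl $ j) / (\<Sum>i\<in>UNIV. 1 / q $ i)"
  have q_nz: "\<And>i. q $ i \<noteq> 0" using q_pos by (metis less_irrefl)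
  have on_hyperplane: "vec 1 \<bullet> (u - Pl) = 0" if "u - flow eta - Pl = 0" for u eta
    using that incidence_balanced[of ends] simple
    by (simp add: simple_graph_def flow_def algebra_simps)
  have hyperplane_total: "(\<Sum>i\<in>UNIV. u $ i) = (\<Sum>i\<in>UNIV. Pl $ i)" if "vec 1 \<bullet> (u - Pl) = 0" for u
    using that unfolding inner_one by (simp add: sum_subtractf)
  have "(\<chi> i. (\<Sum>j\<in>UNIV. Pl $ j) / ((\<Sum>i\<in>UNIV. 1 / q $ i) * q $ i)) - Pl = flow etabar"
    using eq1 unfolding equal_marginal_projection[OF q_nz] flow_def .
  then have "w = (\<chi> i. (\<Sum>j\<in>UNIV. Pl $ j) / ((\<Sum>i\<in>UNIV. 1 / q $ i) * q $ i))"
    unfolding w_def by (metis diff_add_cancel)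
  then have marginal: "q $ i * w $ i = c" for i
    using q_nz[of i] by (simp add: c_def)
  have w_on_hyperplane: "vec 1 \<bullet> (w - Pl) = 0" by (rule on_hyperplane[of w etabar]) (simp add: w_def)
  have unique: "u = w" if "vec 1 \<bullet> (u - Pl) = 0" "cost (diagm q) u \<le> cost (diagm q) w" for u
    by (rule equal_marginal_unique_min[OF q_pos marginal _ that(2)])
      (simp add: hyperplane_total[OF that(1)] hyperplane_total[OF w_on_hyperplane])
  have ubar_w: "ubar = w" by (rule unique[OF ubar_min(1) ubar_min(2)[OF w_on_hyperplane]])
  have ubar_feasible: "ubar - flow etabar - Pl = 0" by (simp add: ubar_w w_def)
  have ubar_optimal: "cost (diagm q) ubar \<le> cost (diagm q) u'" if "u' - flow eta' - Pl = 0" for u' eta'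
    using ubar_min(2)[OF on_hyperplane[OF that]] .
  have optimal_is_ubar: "u = ubar"
    if "u - flow eta - Pl = 0" "\<forall>u' eta'. u' - flow eta' - Pl = 0 \<and> eta' \<in> range (\<lambda>x. transpose (incidence ends) *v x)
          \<longrightarrow> cost (diagm q) u \<le> cost (diagm q) u'" for u eta
    using unique[OF on_hyperplane[OF that(1)]] that(2) ubar_feasible eta_range ubar_w by blast
  show ?thesis
    unfolding flow_def[symmetric]
    using ubar_feasible eta_range ubar_optimal optimal_is_ubar by blast
qed

end
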